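(* Let $\delta\in(0,1)$ and let $(G,\beta,\gamma,\lambda)$ be an anti-ferromagnetic two-spin system whose graph $G$ has maximum degree $\Delta$. Let $\chi=+1$ if $\lambda\le(\gamma/\beta)^{\Delta/2}$ and $\chi=-1$ otherwise. Then: (1) For every $1\le d<\Delta$: if $(\beta,\gamma,\lambda)$ is $d$-unique with gap $\delta$, then $(\beta,\gamma,(1+\frac\delta2)^\chi\lambda)$ is $d$-unique with gap $\frac\delta2$. (2) Suppose moreover that $(\beta,\gamma,\lambda)$ is $(\Delta-1)$-unique with gap $\delta$ and $\Delta-1>(1-\frac\delta2)\overline\Delta$, where $\overline\Delta=\frac{1+\sqrt{\beta\gamma}}{1-\sqrt{\beta\gamma}}$. Then $\lambda\le(\gamma/\beta)^{\Delta/2}$ implies $(1+\frac\delta2)^\chi\lambda<(\gamma/\beta)^{\Delta/2}$, and $\lambda>(\gamma/\beta)^{\Delta/2}$ implies $(1+\frac\delta2)^\chi\lambda>(\gamma/\beta)^{\Delta/2}$.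
   Context: Anti-ferromagnetic two-spin parameters: $0\le\beta\le\gamma$, $\gamma>0$, $\lambda>0$, $\beta\gamma<1$. For an integer $d\ge1$, $(\beta,\gamma,\lambda)$ is $d$-unique with gap $\delta$ if $\frac{d(1-\beta\gamma)\hat x_d}{(\beta\hat x_d+1)(\hat x_d+\gamma)}\le1-\delta$, where $\hat x_d>0$ is the unique fixed point of $F_d(x)=\lambda\left(\frac{\beta x+1}{x+\gamma}\right)^d$. Convention: $(\gamma/\beta)^{\Delta/2}=+\infty$ when $\beta=0$. *)

theory Defs
  imports Complex_Main "HOL-Library.Extended_Real"
begin

definition antiferro :: "real \<Rightarrow> real \<Rightarrow> real \<Rightarrow> bool" where
  "antiferro b g lam \<longleftrightarrow> 0 \<le> b \<and> b \<le> g \<and> g > 0 \<and> lam > 0 \<and> b * g < 1"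

definition F_map :: "real \<Rightarrow> real \<Rightarrow> real \<Rightarrow> nat \<Rightarrow> real \<Rightarrow> real" where
  "F_map b g lam d x = lam * ((b * x + 1) / (x + g)) ^ d"

definition xhat :: "real \<Rightarrow> real \<Rightarrow> real \<Rightarrow> nat \<Rightarrow> real" where
  "xhat b g lam d = (THE x. x > 0 \<and> F_map b g lam d x = x)"

definition d_unique :: "nat \<Rightarrow> real \<Rightarrow> real \<Rightarrow> real \<Rightarrow> real \<Rightarrow> bool" where
  "d_unique d \<delta> b g lam \<longleftrightarrow> d \<ge> 1 \<and>
     (let x = xhat b g lam d in
       real d * (1 - b * g) * x / ((b * x + 1) * (x + g)) \<le> 1 - \<delta>)"

definition thr :: "real \<Rightarrow> real \<Rightarrow> nat \<Rightarrow> ereal" where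
  "thr b g \<Delta> = (if b = 0 then \<infinity> else ereal ((g / b) powr (real \<Delta> / 2)))"

definition chi :: "real \<Rightarrow> real \<Rightarrow> real \<Rightarrow> nat \<Rightarrow> int" where
  "chi b g lam \<Delta> = (if ereal lam \<le> thr b g \<Delta> then 1 else -1)"

definition Delta_bar :: "real \<Rightarrow> real \<Rightarrow> real" where
  "Delta_bar b g = (1 + sqrt (b * g)) / (1 - sqrt (b * g))"

end

theory Submission
  imports Defs
begin

text \<open>
  Let Phi_d(x) = d(1 - \<beta>\<gamma>)x / ((\<beta>x + 1)(x + \<gamma>)), so that d-uniqueness with gap \<delta>
  says Phi_d(x_d) \<le> 1 - \<delta> at the fixed point x_d of F_d. Multiplying \<lambda> by \<mu> with
  \<mu> \<le> c and 1/\<mu> \<le> c moves x_d by at most a factor c, because F_d is decreasing and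
  linear in \<lambda>; Phi_d then also changes by at most a factor c, since Phi_d(x)/x is
  decreasing and x Phi_d(x) increasing. As (1 + \<delta>/2)(1 - \<delta>) \<le> 1 - \<delta>/2, this gives (1).
  At \<lambda> = (\<gamma>/\<beta>)^(\<Delta>/2) the fixed point of F_(\<Delta>-1) is sqrt(\<gamma>/\<beta>), where
  Phi_(\<Delta>-1) = (\<Delta> - 1)/Delta_bar > 1 - \<delta>/2. So the threshold activity is not
  (\<Delta>-1)-unique with gap \<delta>/2, hence by (1) it is not within a factor 1 + \<delta>/2 of \<lambda>,
  and scaling \<lambda> by that factor towards it cannot reach it: this is (2).
\<close>

lemma F_map_antimono:
  assumes "0 \<le> b" "0 < g" "b * g < 1" "0 \<le> lam" "0 \<le> x" "x \<le> y"
  shows "F_map b g lam d y \<le> F_map b g lam d x"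
proof -
  have "(b * y + 1) * (x + g) \<le> (b * x + 1) * (y + g)"
    using mult_right_mono[of "b * g" 1 "y - x"] assms by (simp add: algebra_simps)
  then have "(b * y + 1) / (y + g) \<le> (b * x + 1) / (x + g)"
    using assms by (simp add: divide_simps)
  then show ?thesis
    unfolding F_map_def using assms by (intro mult_left_mono power_mono) auto
qed

lemma F_map_fixed_point_ex1:
  assumes "0 \<le> b" "0 < g" "b * g < 1" "0 < lam"
  shows "\<exists>!x. x > 0 \<and> F_map b g lam d x = x"
proof -
  let ?F = "F_map b g lam d"
  define M where "M = lam / g ^ d"
  have F0: "?F 0 = M"
    by (simp add: F_map_def M_def power_one_over)
  have "M > 0"
    using assms by (simp add: M_def)
  have "?F M \<le> M"
    using F_map_antimono[of b g lam 0 M d] F0 \<open>M > 0\<close> assms by simp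
  moreover have "\<forall>x. 0 \<le> x \<and> x \<le> M \<longrightarrow> isCont (\<lambda>x. ?F x - x) x"
    using assms unfolding F_map_def by (auto intro!: continuous_intros)
  ultimately obtain x where x: "0 \<le> x" "?F x = x"
    using IVT2[of "\<lambda>x. ?F x - x" M 0 0] F0 \<open>M > 0\<close> by force
  with F0 \<open>M > 0\<close> have "x > 0"
    by (cases "x = 0") auto
  moreover have "y = x" if "y > 0" "?F y = y" for y
    using F_map_antimono[of b g lam x y d] F_map_antimono[of b g lam y x d] x that assms
    by (cases "x \<le> y") auto
  ultimately show ?thesis
    using x by blast
qed

lemma xhat_fixed_point:
  assumes "0 \<le> b" "0 < g" "b * g < 1" "0 < lam"
  shows "xhat b g lam d > 0" "F_map b g lam d (xhat b g lam d) = xhat b g lam d"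
  using theI'[OF F_map_fixed_point_ex1[OF assms]] unfolding xhat_def by auto

lemma xhat_eqI:
  assumes "0 \<le> b" "0 < g" "b * g < 1" "0 < lam" "x > 0" "F_map b g lam d x = x"
  shows "xhat b g lam d = x"
  unfolding xhat_def using the1_equality[OF F_map_fixed_point_ex1[OF assms(1-4)]] assms(5,6)
  by auto

lemma xhat_mult_bounds:
  assumes "0 \<le> b" "0 < g" "b * g < 1" "0 < lam" "1 \<le> mu"
  shows "xhat b g lam d \<le> xhat b g (mu * lam) d"
    and "xhat b g (mu * lam) d \<le> mu * xhat b g lam d"
proof -
  define x where "x = xhat b g lam d"
  define y where "y = xhat b g (mu * lam) d"
  have x: "x > 0" "F_map b g lam d x = x"
    using xhat_fixed_point[OF assms(1-4)] unfolding x_def by auto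
  have "y > 0" "mu * F_map b g lam d y = y"
    using xhat_fixed_point[of b g "mu * lam" d] assms unfolding y_def by (auto simp: F_map_def)
  moreover have "F_map b g lam d y \<ge> 0"
    using assms \<open>y > 0\<close> by (simp add: F_map_def)
  ultimately have "F_map b g lam d y \<le> y"
    using mult_right_mono[OF assms(5)] by fastforce
  have "x \<le> y"
  proof (rule ccontr)
    assume "\<not> x \<le> y"
    then show False
      using F_map_antimono[of b g lam y x d] \<open>F_map b g lam d y \<le> y\<close> \<open>y > 0\<close> x assms by auto
  qed
  moreover have "y \<le> mu * x"
    using F_map_antimono[of b g lam x y d] \<open>x \<le> y\<close> \<open>mu * F_map b g lam d y = y\<close> x assms
    by (metis less_imp_le mult_left_mono order_less_le_trans zero_less_one)
  ultimately show "xhat b g lam d \<le> xhat b g (mu * lam) d"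
    and "xhat b g (mu * lam) d \<le> mu * xhat b g lam d"
    unfolding x_def y_def by auto
qed

text \<open>This is Phi_d; at a fixed point x of F_map b g lam d it equals the slope |F_map' x|.\<close>

definition contraction_rate :: "nat \<Rightarrow> real \<Rightarrow> real \<Rightarrow> real \<Rightarrow> real" where
  "contraction_rate d b g x = real d * (1 - b * g) * x / ((b * x + 1) * (x + g))"

lemma d_unique_iff_contraction_rate:
  "d_unique d \<delta> b g lam \<longleftrightarrow> 1 \<le> d \<and> contraction_rate d b g (xhat b g lam d) \<le> 1 - \<delta>"
  unfolding d_unique_def contraction_rate_def Let_def by simp

lemma contraction_rate_div_antimono:
  assumes "0 \<le> b" "0 < g" "b * g \<le> 1" "0 < x" "x \<le> y"
  shows "contraction_rate d b g y / y \<le> contraction_rate d b g x / x"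
proof -
  have "(b * x + 1) * (x + g) \<le> (b * y + 1) * (y + g)"
    using assms by (intro mult_mono add_mono mult_left_mono) auto
  moreover have "0 < (b * x + 1) * (x + g)"
    using assms by (simp add: add_nonneg_pos)
  ultimately show ?thesis
    using assms unfolding contraction_rate_def
    by (simp add: divide_left_mono mult_pos_pos)
qed

lemma contraction_rate_mult_mono:
  assumes "0 \<le> b" "0 < g" "b * g \<le> 1" "0 < x" "x \<le> y"
  shows "x * contraction_rate d b g x \<le> y * contraction_rate d b g y"
proof -
  have "0 < b * x + 1" "0 < b * y + 1"
    using assms by (simp_all add: add_nonneg_pos)
  then have "x / (b * x + 1) \<le> y / (b * y + 1)" "x / (x + g) \<le> y / (y + g)"
    using assms by (simp_all add: divide_simps algebra_simps mult_left_mono)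
  then have "x / (b * x + 1) * (x / (x + g)) \<le> y / (b * y + 1) * (y / (y + g))"
    using assms by (intro mult_mono) auto
  then have "real d * (1 - b * g) * (x / (b * x + 1) * (x / (x + g)))
      \<le> real d * (1 - b * g) * (y / (b * y + 1) * (y / (y + g)))"
    using assms by (intro mult_left_mono) auto
  then show ?thesis
    unfolding contraction_rate_def by (simp add: mult_ac)
qed

lemma contraction_rate_le_scale:
  assumes "0 \<le> b" "0 < g" "b * g \<le> 1" "0 < x" "0 < y" "y \<le> c * x" "x \<le> c * y"
  shows "contraction_rate d b g y \<le> c * contraction_rate d b g x"
proof (cases "x \<le> y")
  case True
  have "contraction_rate d b g y \<le> y * (contraction_rate d b g x / x)"
    using contraction_rate_div_antimono[OF assms(1-4) True, of d] assms by (simp add: field_simps)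
  also have "\<dots> \<le> c * x * (contraction_rate d b g x / x)"
    using assms by (intro mult_right_mono) (auto simp: contraction_rate_def add_nonneg_pos)
  finally show ?thesis
    using assms by simp
next
  case False
  have "y * contraction_rate d b g y \<le> x * contraction_rate d b g x"
    using contraction_rate_mult_mono[OF assms(1-3,5)] False by simp
  also have "\<dots> \<le> c * y * contraction_rate d b g x"
    using assms by (intro mult_right_mono) (auto simp: contraction_rate_def add_nonneg_pos)
  finally show ?thesis
    using assms by (simp add: mult_ac)
qed

lemma xhat_scale_within:
  assumes "0 \<le> b" "0 < g" "b * g < 1" "0 < lam" "0 < mu" "mu \<le> c" "1 / mu \<le> c"
  shows "xhat b g (mu * lam) d \<le> c * xhat b g lam d"
    and "xhat b g lam d \<le> c * xhat b g (mu * lam) d"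
proof -
  define x y where "x = xhat b g lam d" and "y = xhat b g (mu * lam) d"
  have "1 \<le> c"
  proof (cases "1 \<le> mu")
    case False
    then have "1 < 1 / mu"
      using assms by simp
    with assms(7) show ?thesis by linarith
  qed (use assms in simp)
  have "0 < x" "0 < y"
    using xhat_fixed_point assms unfolding x_def y_def by auto
  then have "mu * x \<le> c * x" "1 / mu * y \<le> c * y" "1 * x \<le> c * x" "1 * y \<le> c * y"
    using assms(6,7) \<open>1 \<le> c\<close> by (meson less_imp_le mult_right_mono)+
  moreover have "x \<le> y \<and> y \<le> mu * x \<or> y \<le> x \<and> x \<le> 1 / mu * y"
  proof (cases "1 \<le> mu")
    case True
    then show ?thesis
      using xhat_mult_bounds[OF assms(1-4) True] unfolding x_def y_def by blast
  next
    case False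
    then have "0 < mu * lam" "1 \<le> 1 / mu"
      using assms by auto
    from xhat_mult_bounds[OF assms(1-3) this] show ?thesis
      using assms(5) unfolding x_def y_def by simp
  qed
  ultimately show "y \<le> c * x" "x \<le> c * y"
    by linarith+
qed

lemma d_unique_scale:
  assumes "0 \<le> b" "0 < g" "b * g < 1" "0 < lam" "d_unique d \<delta> b g lam"
    and "0 < mu" "mu \<le> 1 + \<delta> / 2" "1 / mu \<le> 1 + \<delta> / 2"
  shows "d_unique d (\<delta> / 2) b g (mu * lam)"
proof -
  define c where "c = 1 + \<delta> / 2"
  have "0 \<le> c"
    using assms(6,7) unfolding c_def by linarith
  have "contraction_rate d b g (xhat b g (mu * lam) d)
      \<le> c * contraction_rate d b g (xhat b g lam d)"
    using assms xhat_fixed_point[of b g lam d] xhat_fixed_point[of b g "mu * lam" d]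
      xhat_scale_within[of b g lam mu c d]
    by (intro contraction_rate_le_scale) (auto simp: c_def)
  also have "\<dots> \<le> c * (1 - \<delta>)"
    using assms(5) \<open>0 \<le> c\<close> by (auto simp: d_unique_iff_contraction_rate intro: mult_left_mono)
  also have "\<dots> \<le> 1 - \<delta> / 2"
    unfolding c_def by (simp add: algebra_simps)
  finally show ?thesis
    using assms(5) by (simp add: d_unique_iff_contraction_rate)
qed

lemma xhat_at_threshold:
  assumes "0 < b" "0 < g" "b * g < 1"
  shows "xhat b g ((g / b) powr (real (Suc d) / 2)) d = sqrt (g / b)"
proof -
  define x where "x = sqrt (g / b)"
  have "x > 0" "b * x * x = g"
    using assms unfolding x_def by (simp_all add: mult.assoc)
  then have "(b * x + 1) / (x + g) = 1 / x"
    using assms(2) by (simp add: field_simps)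
  moreover have "(g / b) powr (real (Suc d) / 2) = x ^ Suc d"
  proof -
    have "(g / b) powr (real (Suc d) / 2) = ((g / b) powr (1 / 2)) powr real (Suc d)"
      by (simp add: powr_powr)
    also have "\<dots> = x powr real (Suc d)"
      using assms unfolding x_def by (simp add: powr_half_sqrt)
    also have "\<dots> = x ^ Suc d"
      using \<open>x > 0\<close> by (rule powr_realpow)
    finally show ?thesis .
  qed
  ultimately have "F_map b g ((g / b) powr (real (Suc d) / 2)) d x = x"
    using \<open>x > 0\<close> unfolding F_map_def by (simp add: power_one_over)
  then show ?thesis
    using xhat_eqI assms \<open>x > 0\<close> unfolding x_def by (simp add: less_imp_le)
qed

lemma contraction_rate_sqrt:
  assumes "0 < b" "0 < g"
  shows "contraction_rate d b g (sqrt (g / b)) = real d * (1 - sqrt (b * g)) / (1 + sqrt (b * g))"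
proof -
  define x s where "x = sqrt (g / b)" and "s = sqrt (b * g)"
  have "sqrt b * sqrt b = b" "sqrt g * sqrt g = g" "sqrt b > 0"
    using assms by simp_all
  then have "b * x = s" "x * s = g" "s * s = b * g"
    unfolding x_def s_def real_sqrt_divide real_sqrt_mult by (simp_all add: field_simps)
  then have "(b * x + 1) * (x + g) = (s + 1) * (x + x * s)"
    by simp
  also have "\<dots> = (1 + s) * (1 + s) * x"
    by (simp add: algebra_simps)
  finally have den: "(b * x + 1) * (x + g) = (1 + s) * (1 + s) * x" .
  have num: "1 - b * g = (1 - s) * (1 + s)"
    using \<open>s * s = b * g\<close> by (simp add: algebra_simps)
  have "x > 0" "s \<ge> 0"
    using assms unfolding x_def s_def by simp_all
  then show ?thesis
    unfolding contraction_rate_def x_def[symmetric] s_def[symmetric] den num by simp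
qed

lemma not_d_unique_at_threshold:
  assumes "0 < b" "0 < g" "b * g < 1" "(1 - \<epsilon>) * Delta_bar b g < real d"
  shows "\<not> d_unique d \<epsilon> b g ((g / b) powr (real (Suc d) / 2))"
proof -
  define s where "s = sqrt (b * g)"
  have "0 \<le> s" "s < 1"
    using assms unfolding s_def by (simp_all add: real_sqrt_lt_1_iff)
  then have "1 - \<epsilon> < real d * (1 - s) / (1 + s)"
    using assms(4) unfolding Delta_bar_def s_def[symmetric] by (simp add: field_simps)
  then show ?thesis
    using assms unfolding d_unique_iff_contraction_rate xhat_at_threshold[OF assms(1-3)]
      contraction_rate_sqrt[OF assms(1,2)] s_def by simp
qed

lemma d_unique_scale_keeps_side:
  assumes "0 \<le> b" "0 < g" "b * g < 1" "0 < lam" "0 \<le> \<delta>" "0 < T"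
    and "d_unique d \<delta> b g lam" "\<not> d_unique d (\<delta> / 2) b g T"
  shows "lam \<le> T \<Longrightarrow> (1 + \<delta> / 2) * lam < T"
    and "T < lam \<Longrightarrow> T < lam / (1 + \<delta> / 2)"
proof -
  have not_close: "\<not> (T / lam \<le> 1 + \<delta> / 2 \<and> lam / T \<le> 1 + \<delta> / 2)"
    using d_unique_scale[OF assms(1-4,7), of "T / lam"] assms(4,6,8) by auto
  have grow: "x \<le> (1 + \<delta> / 2) * x" if "0 < x" for x
    using that assms(5) by simp
  show "(1 + \<delta> / 2) * lam < T" if "lam \<le> T"
  proof -
    have "lam / T \<le> 1 + \<delta> / 2"
      using order_trans[OF that grow[OF assms(6)]] assms(6) by (simp add: divide_le_eq)
    then show ?thesis
      using not_close assms(4) by (simp add: field_simps)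
  qed
  show "T < lam / (1 + \<delta> / 2)" if "T < lam"
  proof -
    have "T / lam \<le> 1 + \<delta> / 2"
      using order_trans[OF less_imp_le[OF that] grow[OF assms(4)]] assms(4)
      by (simp add: divide_le_eq)
    then show ?thesis
      using not_close assms(5,6) by (simp add: field_simps)
  qed
qed

lemma d_unique_chi_scale:
  assumes "antiferro b g lam" "0 \<le> \<delta>" "d_unique d \<delta> b g lam"
  shows "d_unique d (\<delta> / 2) b g ((1 + \<delta> / 2) powi chi b g lam \<Delta> * lam)"
proof -
  define c where "c = 1 + \<delta> / 2"
  have "1 \<le> c"
    using assms(2) unfolding c_def by simp
  then have "0 < c powi chi b g lam \<Delta>" "c powi chi b g lam \<Delta> \<le> c"
    "1 / c powi chi b g lam \<Delta> \<le> c"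
    using order_trans[of "inverse c" 1 c] unfolding chi_def
    by (auto simp: power_int_minus divide_inverse inverse_le_1_iff)
  then show ?thesis
    using d_unique_scale assms unfolding antiferro_def c_def by blast
qed

lemma chi_scale_keeps_threshold_side:
  assumes "antiferro b g lam" "0 \<le> \<delta>" "d_unique (\<Delta> - 1) \<delta> b g lam"
    and "(1 - \<delta> / 2) * Delta_bar b g < real (\<Delta> - 1)"
  defines "lam' \<equiv> (1 + \<delta> / 2) powi chi b g lam \<Delta> * lam"
  shows "ereal lam \<le> thr b g \<Delta> \<Longrightarrow> ereal lam' < thr b g \<Delta>"
    and "thr b g \<Delta> < ereal lam \<Longrightarrow> thr b g \<Delta> < ereal lam'"
proof -
  have par: "0 \<le> b" "0 < g" "b * g < 1" "0 < lam"
    using assms(1) unfolding antiferro_def by auto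
  have "(ereal lam \<le> thr b g \<Delta> \<longrightarrow> ereal lam' < thr b g \<Delta>) \<and>
      (thr b g \<Delta> < ereal lam \<longrightarrow> thr b g \<Delta> < ereal lam')"
  proof (cases "b = 0")
    case False
    define T where "T = (g / b) powr (real \<Delta> / 2)"
    have "0 < b" "0 < T" "thr b g \<Delta> = ereal T"
      using False par unfolding T_def thr_def by auto
    moreover have "\<Delta> = Suc (\<Delta> - 1)"
      using assms(3) unfolding d_unique_def by linarith
    ultimately have "\<not> d_unique (\<Delta> - 1) (\<delta> / 2) b g T"
      using not_d_unique_at_threshold[OF _ par(2,3) assms(4)] unfolding T_def by metis
    note side = d_unique_scale_keeps_side[OF par assms(2) \<open>0 < T\<close> assms(3) this]
    show ?thesis
      using side \<open>thr b g \<Delta> = ereal T\<close> unfolding lam'_def chi_def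
      by (auto simp: power_int_minus field_simps)
  qed (simp add: thr_def)
  then show "ereal lam \<le> thr b g \<Delta> \<Longrightarrow> ereal lam' < thr b g \<Delta>"
    and "thr b g \<Delta> < ereal lam \<Longrightarrow> thr b g \<Delta> < ereal lam'"
    by auto
qed

theorem lemma7p10:
  fixes b g lam \<delta> :: real and \<Delta> :: nat
  assumes "antiferro b g lam"
    and "0 < \<delta>" and "\<delta> < 1"
  defines "lam' \<equiv> (1 + \<delta> / 2) powi (chi b g lam \<Delta>) * lam"
  shows "(\<forall>d::nat. 1 \<le> d \<and> d < \<Delta> \<longrightarrow> d_unique d \<delta> b g lam \<longrightarrow>
            d_unique d (\<delta> / 2) b g lam')
     \<and> (d_unique (\<Delta> - 1) \<delta> b g lam \<and>
         real (\<Delta> - 1) > (1 - \<delta> / 2) * Delta_bar b g \<longrightarrow>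
          (ereal lam \<le> thr b g \<Delta> \<longrightarrow> ereal lam' < thr b g \<Delta>) \<and>
          (ereal lam > thr b g \<Delta> \<longrightarrow> ereal lam' > thr b g \<Delta>))"
  using d_unique_chi_scale[OF assms(1)] chi_scale_keeps_threshold_side[OF assms(1)] assms(2)
  unfolding lam'_def by auto

end
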